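(* Let $E$ be a real Hilbert space and define the relation $\preceq$ on $E$ by $x\preceq y\iff (x,x)\le (x,y)$. Then $(E,\preceq)$ is a cc sponge with a least element.
   Context: An orientation is a reflexive, antisymmetric binary relation. For $P\subseteq E$, $P$ is right-bounded if some $s$ has $p\preceq s$ for all $p\in P$; the join of $P$ is an $x$ with $p\preceq x$ for all $p\in P$ and $x\preceq y$ whenever $p\preceq y$ for all $p\in P$. An oriented set is a cc sponge if every nonempty right-bounded subset has a join. A least element is an element $z$ with $z\preceq x$ for all $x\in E$. *)

theory Defs
  imports "HOL-Analysis.Analysis"
begin

text \<open>Order-theoretic notions for a binary relation r on the whole type (the set E is UNIV).\<close>

definition orientation :: "('a \<Rightarrow> 'a \<Rightarrow> bool) \<Rightarrow> bool" where
  "orientation r \<longleftrightarrow> (\<forall>x. r x x) \<and> (\<forall>x y. r x y \<and> r y x \<longrightarrow> x = y)"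

definition right_bounded :: "('a \<Rightarrow> 'a \<Rightarrow> bool) \<Rightarrow> 'a set \<Rightarrow> bool" where
  "right_bounded r P \<longleftrightarrow> (\<exists>s. \<forall>p\<in>P. r p s)"

definition is_join :: "('a \<Rightarrow> 'a \<Rightarrow> bool) \<Rightarrow> 'a set \<Rightarrow> 'a \<Rightarrow> bool" where
  "is_join r P x \<longleftrightarrow> (\<forall>p\<in>P. r p x) \<and> (\<forall>y. (\<forall>p\<in>P. r p y) \<longrightarrow> r x y)"

definition cc_sponge :: "('a \<Rightarrow> 'a \<Rightarrow> bool) \<Rightarrow> bool" where
  "cc_sponge r \<longleftrightarrow> orientation r \<and>
     (\<forall>P. P \<noteq> {} \<and> right_bounded r P \<longrightarrow> (\<exists>x. is_join r P x))"

definition least_element :: "('a \<Rightarrow> 'a \<Rightarrow> bool) \<Rightarrow> 'a \<Rightarrow> bool" where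
  "least_element r z \<longleftrightarrow> (\<forall>x. r z x)"

definition hrel :: "'a::real_inner \<Rightarrow> 'a \<Rightarrow> bool" where
  "hrel x y \<longleftrightarrow> inner x x \<le> inner x y"

end

theory Submission
  imports Defs
begin

text \<open>The upper bounds of a set \<open>P\<close> form the intersection of the closed half-spaces
  \<open>{y. (p, p) \<le> (p, y)}\<close>, a closed convex set, nonempty if \<open>P\<close> is right-bounded.
  By completeness and the parallelogram law (which makes norm-minimising sequences
  Cauchy) this set has an element \<open>x\<close> of least norm, i.e. \<open>x\<close> is the projection of \<open>0\<close>
  onto it; the variational inequality of the projection reads \<open>(x, x) \<le> (x, y)\<close> for
  every upper bound \<open>y\<close>, so \<open>x\<close> is the join. The least element is \<open>0\<close>, and
  antisymmetry holds since the two inequalities add up to \<open>(x - y, x - y) \<le> 0\<close>.\<close>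

lemma parallelogram_law:
  fixes a b :: "'a::real_inner"
  shows "(norm (a + b))\<^sup>2 + (norm (a - b))\<^sup>2 = 2 * (norm a)\<^sup>2 + 2 * (norm b)\<^sup>2"
  by (simp add: power2_norm_eq_inner inner_diff_left inner_diff_right
      inner_add_left inner_add_right inner_commute)

lemma convex_dist_le_norm_excess:
  fixes S :: "'a::real_inner set"
  assumes "convex S" "x \<in> S" "y \<in> S" "0 \<le> d" "\<And>z. z \<in> S \<Longrightarrow> d \<le> norm z"
  shows "(dist x y)\<^sup>2 \<le> 2 * ((norm x)\<^sup>2 - d\<^sup>2) + 2 * ((norm y)\<^sup>2 - d\<^sup>2)"
proof -
  have "(1/2) *\<^sub>R x + (1/2) *\<^sub>R y \<in> S"
    using assms(1-3) by (simp add: convex_def)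
  then have "d \<le> norm ((1/2) *\<^sub>R (x + y))"
    using assms(5) by (simp add: scaleR_add_right)
  then have "2 * d \<le> norm (x + y)"
    by simp
  then have "(2 * d)\<^sup>2 \<le> (norm (x + y))\<^sup>2"
    using \<open>0 \<le> d\<close> by (intro power_mono) auto
  then show ?thesis
    using parallelogram_law[of x y] by (simp add: dist_norm power_mult_distrib)
qed

lemma Cauchy_if_dist_sq_le:
  fixes y :: "nat \<Rightarrow> 'a::metric_space"
  assumes "f \<longlonglongrightarrow> 0" "\<And>m n. (dist (y m) (y n))\<^sup>2 \<le> f m + f n"
  shows "Cauchy y"
proof (rule metric_CauchyI)
  fix e :: real
  assume "0 < e"
  then have "eventually (\<lambda>n. f n < e\<^sup>2 / 2) sequentially"
    using assms(1) by (intro order_tendstoD) auto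
  then obtain M where M: "\<And>n. M \<le> n \<Longrightarrow> f n < e\<^sup>2 / 2"
    by (auto simp: eventually_sequentially)
  have "dist (y m) (y n) < e" if "M \<le> m" "M \<le> n" for m n
  proof -
    have "(dist (y m) (y n))\<^sup>2 < e\<^sup>2"
      using assms(2)[of m n] M[OF that(1)] M[OF that(2)] by linarith
    then show ?thesis
      using \<open>0 < e\<close> by (simp add: power_less_imp_less_base)
  qed
  then show "\<exists>M. \<forall>m\<ge>M. \<forall>n\<ge>M. dist (y m) (y n) < e"
    by blast
qed

lemma closed_convex_has_min_norm:
  fixes S :: "'a::{real_inner, complete_space} set"
  assumes "closed S" "convex S" "S \<noteq> {}"
  obtains x where "x \<in> S" "\<And>z. z \<in> S \<Longrightarrow> norm x \<le> norm z"
proof -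
  define d where "d = Inf (norm ` S)"
  have bdd: "bdd_below (norm ` S)"
    by (rule bdd_belowI[of _ 0]) auto
  have d_le: "d \<le> norm z" if "z \<in> S" for z
    unfolding d_def using bdd that by (simp add: cInf_lower)
  have "0 \<le> d"
    unfolding d_def using assms(3) by (auto intro: cInf_greatest)
  have "d \<in> closure (norm ` S)"
    unfolding d_def using assms(3) bdd by (intro closure_contains_Inf) auto
  then obtain u where u: "\<And>n. u n \<in> norm ` S" and "u \<longlonglongrightarrow> d"
    by (auto simp: closure_sequential)
  have "\<forall>n. \<exists>z. z \<in> S \<and> u n = norm z"
    using u by blast
  then obtain y where y: "\<And>n. y n \<in> S" and u_eq: "u = (\<lambda>n. norm (y n))"
    by metis
  have y_lim: "(\<lambda>n. norm (y n)) \<longlonglongrightarrow> d"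
    using \<open>u \<longlonglongrightarrow> d\<close> by (simp add: u_eq)
  define f where "f n = 2 * ((norm (y n))\<^sup>2 - d\<^sup>2)" for n
  have "f \<longlonglongrightarrow> 2 * (d\<^sup>2 - d\<^sup>2)"
    unfolding f_def by (intro tendsto_intros y_lim)
  then have "f \<longlonglongrightarrow> 0"
    by simp
  moreover have "(dist (y m) (y n))\<^sup>2 \<le> f m + f n" for m n
    unfolding f_def using convex_dist_le_norm_excess[OF assms(2) y y \<open>0 \<le> d\<close> d_le] .
  ultimately have "Cauchy y"
    by (rule Cauchy_if_dist_sq_le)
  then obtain x where x_lim: "y \<longlonglongrightarrow> x"
    using Cauchy_convergent_iff convergent_def by blast
  have "x \<in> S"
    using assms(1) y x_lim closed_sequentially by blast
  moreover have "norm x = d"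
    using tendsto_norm[OF x_lim] y_lim by (rule LIMSEQ_unique)
  ultimately show ?thesis
    using d_le that by auto
qed

lemma orientation_hrel: "orientation (hrel :: 'a::real_inner \<Rightarrow> 'a \<Rightarrow> bool)"
  unfolding orientation_def hrel_def
proof (intro conjI allI impI)
  fix x y :: 'a
  assume "inner x x \<le> inner x y \<and> inner y y \<le> inner y x"
  then have "inner (x - y) (x - y) \<le> 0"
    by (simp add: inner_diff_left inner_diff_right inner_commute)
  then show "x = y"
    using inner_ge_zero[of "x - y"] by simp
qed simp

lemma least_element_hrel_zero: "least_element hrel (0::'a::real_inner)"
  unfolding least_element_def hrel_def by simp

lemma min_norm_hrel:
  fixes S :: "'a::real_inner set"
  assumes "closed S" "convex S" "x \<in> S" "\<And>z. z \<in> S \<Longrightarrow> norm x \<le> norm z" "y \<in> S"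
  shows "hrel x y"
proof -
  have "inner (0 - x) (y - x) \<le> 0"
    using assms by (intro any_closest_point_dot[of S]) auto
  then show ?thesis
    unfolding hrel_def by (simp add: inner_diff_right)
qed

lemma right_bounded_hrel_has_join:
  fixes P :: "'a::{real_inner, complete_space} set"
  assumes "right_bounded hrel P"
  shows "\<exists>x. is_join hrel P x"
proof -
  define U where "U = (\<Inter>p\<in>P. {y. inner p p \<le> inner p y})"
  have U_iff: "y \<in> U \<longleftrightarrow> (\<forall>p\<in>P. hrel p y)" for y
    unfolding U_def hrel_def by auto
  have "closed U"
    unfolding U_def by (intro closed_INT ballI closed_halfspace_ge)
  moreover have "convex U"
    unfolding U_def by (intro convex_INT ballI convex_halfspace_ge)
  moreover have "U \<noteq> {}"
    using assms U_iff unfolding right_bounded_def by auto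
  ultimately obtain x where "x \<in> U" "\<And>z. z \<in> U \<Longrightarrow> norm x \<le> norm z"
    by (blast intro: closed_convex_has_min_norm)
  then have "is_join hrel P x"
    using min_norm_hrel[OF \<open>closed U\<close> \<open>convex U\<close>] U_iff unfolding is_join_def by blast
  then show ?thesis ..
qed

theorem mainTheorem7:
  shows "cc_sponge (hrel :: 'a::{real_inner, complete_space} \<Rightarrow> 'a \<Rightarrow> bool)
         \<and> (\<exists>z::'a. least_element hrel z)"
  using orientation_hrel right_bounded_hrel_has_join least_element_hrel_zero
  unfolding cc_sponge_def by blast

end
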